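(* Let $m\in\mathbb{N}$, let $u,v\in\ell^1(\mathbb{R}^m)$ and $q\in\partial\|\cdot\|_{\ell^1(\mathbb{R}^m)}(v)$. Then $$\mathrm{ICB}^q_{\ell^1(\mathbb{R}^m)}(u,v)=\sum_{i\in\mathbb{N}}G(u_i,q_i),$$ where $G:\mathbb{R}^m\times\mathbb{R}^m\to\mathbb{R}$ is given by $$G(u_i,q_i)=\begin{cases}|u_i|\big(1-|\cos(\varphi_i)|\,|q_i|\big), & |q_i|<|\cos(\varphi_i)|,\\ |u_i|\,|\sin(\varphi_i)|\sqrt{1-|q_i|^2}, & |q_i|\ge|\cos(\varphi_i)|,\end{cases}$$ and $\varphi_i$ denotes the angle between $u_i$ and $q_i$, i.e. $\cos(\varphi_i)|u_i||q_i|=u_i\cdot q_i$, with $\varphi_i:=0$ if $q_i=0$ or $u_i=0$.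
   Context: $\ell^1(\mathbb{R}^m)$ is the space of sequences $(x_i)_{i\in\mathbb{N}}$, $x_i\in\mathbb{R}^m$, with $\|x\|_{\ell^1(\mathbb{R}^m)}=\sum_i|x_i|<\infty$, $|\cdot|$ the Euclidean norm; subgradients lie in $\ell^\infty(\mathbb{R}^m)$ with pairing $\langle q,u\rangle=\sum_i q_i\cdot u_i$. Bregman distance: $D^q_{\ell^1(\mathbb{R}^m)}(u,v)=\|u\|_{\ell^1(\mathbb{R}^m)}-\|v\|_{\ell^1(\mathbb{R}^m)}-\langle q,u-v\rangle$. $\mathrm{ICB}^q_{\ell^1(\mathbb{R}^m)}(u,v)=\inf_{z\in\ell^1(\mathbb{R}^m)}\big(D^q_{\ell^1(\mathbb{R}^m)}(u-z,v)+D^{-q}_{\ell^1(\mathbb{R}^m)}(z,-v)\big)$. *)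

theory Defs
  imports "HOL-Analysis.Analysis"
begin

text \<open>Elements of l^1(R^m) are sequences nat => real^'m with summable Euclidean norms;
  the dimension m is the cardinality of the finite index type 'm.\<close>

definition in_l1 :: "(nat \<Rightarrow> real^'m) \<Rightarrow> bool" where
  "in_l1 x \<longleftrightarrow> summable (\<lambda>i. norm (x i))"

definition l1norm :: "(nat \<Rightarrow> real^'m) \<Rightarrow> real" where
  "l1norm x = (\<Sum>i. norm (x i))"

definition in_linf :: "(nat \<Rightarrow> real^'m) \<Rightarrow> bool" where
  "in_linf q \<longleftrightarrow> bounded (range q)"

definition pairing :: "(nat \<Rightarrow> real^'m) \<Rightarrow> (nat \<Rightarrow> real^'m) \<Rightarrow> real" where
  "pairing q u = (\<Sum>i. q i \<bullet> u i)"

definition subdiff_l1 :: "(nat \<Rightarrow> real^'m) \<Rightarrow> (nat \<Rightarrow> real^'m) set" where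
  "subdiff_l1 v = {q. in_linf q \<and>
      (\<forall>w. in_l1 w \<longrightarrow> l1norm w \<ge> l1norm v + pairing q (\<lambda>i. w i - v i))}"

definition bregman_l1 :: "(nat \<Rightarrow> real^'m) \<Rightarrow> (nat \<Rightarrow> real^'m) \<Rightarrow> (nat \<Rightarrow> real^'m) \<Rightarrow> real" where
  "bregman_l1 q u v = l1norm u - l1norm v - pairing q (\<lambda>i. u i - v i)"

definition ICB_l1 :: "(nat \<Rightarrow> real^'m) \<Rightarrow> (nat \<Rightarrow> real^'m) \<Rightarrow> (nat \<Rightarrow> real^'m) \<Rightarrow> real" where
  "ICB_l1 q u v = Inf {bregman_l1 q (\<lambda>i. u i - z i) v + bregman_l1 (\<lambda>i. - q i) z (\<lambda>i. - v i)
                      | z. in_l1 z}"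

definition vangle :: "real^'m \<Rightarrow> real^'m \<Rightarrow> real" where
  "vangle a b = (if a = 0 \<or> b = 0 then 0 else arccos ((a \<bullet> b) / (norm a * norm b)))"

definition G :: "real^'m \<Rightarrow> real^'m \<Rightarrow> real" where
  "G a b = (let \<phi> = vangle a b in
     if norm b < \<bar>cos \<phi>\<bar> then norm a * (1 - \<bar>cos \<phi>\<bar> * norm b)
     else norm a * \<bar>sin \<phi>\<bar> * sqrt (1 - (norm b)\<^sup>2))"

end

theory Submission
  imports Defs
begin

text \<open>Since q is a subgradient of the l^1 norm at v, every norm (q i) is at most 1 and
  pairing q v = l1norm v, so the objective of the ICB turns into the separable sum of
  norm (u i - z i) + norm (z i) + 2 q i \<bullet> z i - q i \<bullet> u i. Each summand is bounded below by
  y \<bullet> u i for every y with norm (y + q i), norm (y - q i) \<le> 1 (weak duality), and the best such y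
  is matched by an explicit z, up to any \<epsilon> > 0 when norm (q i) = 1. Since l^1 contains all
  finite modifications of 0, the infimum of the sum is the sum of the pointwise infima.\<close>

definition icb_term :: "'a::real_inner \<Rightarrow> 'a \<Rightarrow> 'a \<Rightarrow> real" where
  "icb_term u q z = norm (u - z) + norm z + 2 * (q \<bullet> z) - q \<bullet> u"

definition orth_part :: "'a::real_inner \<Rightarrow> 'a \<Rightarrow> 'a" where
  "orth_part u q = u - ((u \<bullet> q) / (norm q)\<^sup>2) *\<^sub>R q"

text \<open>The first branch is the case |q| < |cos \<phi>| of G.\<close>
definition icb_min :: "'a::real_inner \<Rightarrow> 'a \<Rightarrow> real" where
  "icb_min u q = (if norm u * (norm q)\<^sup>2 < \<bar>u \<bullet> q\<bar> then norm u - \<bar>u \<bullet> q\<bar>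
     else norm (orth_part u q) * sqrt (1 - (norm q)\<^sup>2))"

lemma orth_part_inner_right [simp]: "orth_part u q \<bullet> q = 0"
  by (cases "q = 0") (simp_all add: orth_part_def inner_diff_left power2_norm_eq_inner)

lemma orth_part_uminus [simp]: "orth_part u (- q) = orth_part u q"
  by (simp add: orth_part_def)

lemma inner_orth_part_self: "orth_part u q \<bullet> u = (norm (orth_part u q))\<^sup>2"
proof -
  have "orth_part u q \<bullet> u = orth_part u q \<bullet> (orth_part u q + ((u \<bullet> q) / (norm q)\<^sup>2) *\<^sub>R q)"
    by (simp add: orth_part_def)
  also have "\<dots> = (norm (orth_part u q))\<^sup>2"
    by (simp add: inner_add_right power2_norm_eq_inner)
  finally show ?thesis .
qed

lemma norm_orth_part_sq: "(norm (orth_part u q))\<^sup>2 = (norm u)\<^sup>2 - (u \<bullet> q)\<^sup>2 / (norm q)\<^sup>2"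
  unfolding inner_orth_part_self[symmetric]
  by (simp add: orth_part_def inner_diff_left inner_commute[of q] dot_square_norm power2_eq_square)

lemma icb_min_uminus [simp]: "icb_min u (- q) = icb_min u q"
  by (simp add: icb_min_def)

lemma icb_term_uminus: "icb_term u (- q) z = icb_term u q (u - z)"
  by (simp add: icb_term_def inner_diff_right)

lemma inner_le_norm_if_norm_le_1: "norm (p::'a::real_inner) \<le> 1 \<Longrightarrow> p \<bullet> x \<le> norm x"
  using norm_cauchy_schwarz[of p x] mult_left_le_one_le[of "norm x" "norm p"]
  by (simp add: mult.commute)

text \<open>Weak duality: y + q and y - q are subgradients of the norm.\<close>
lemma inner_le_icb_term:
  fixes u q y z :: "'a::real_inner"
  assumes "norm (y + q) \<le> 1" and "norm (y - q) \<le> 1"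
  shows "y \<bullet> u \<le> icb_term u q z"
proof -
  have "(y + q) \<bullet> (u - z) \<le> norm (u - z)" "(y - q) \<bullet> z \<le> norm z"
    using assms by (simp_all add: inner_le_norm_if_norm_le_1)
  then show ?thesis
    unfolding icb_term_def by (simp add: inner_simps inner_commute algebra_simps)
qed

lemma icb_term_nonneg: "norm q \<le> 1 \<Longrightarrow> 0 \<le> icb_term u q z"
  using inner_le_icb_term[of 0 q u z] by simp

lemma diff_inner_le_icb_term:
  fixes u q z :: "'a::real_inner"
  assumes steep: "norm u * (norm q)\<^sup>2 < u \<bullet> q"
  shows "norm u - u \<bullet> q \<le> icb_term u q z"
proof -
  have "u \<noteq> 0"
    using steep by auto
  define w where "w = (1 / norm u) *\<^sub>R u"
  have "norm (w - q + q) \<le> 1"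
    using \<open>u \<noteq> 0\<close> by (simp add: w_def)
  moreover have "norm (w - q - q) \<le> 1"
  proof -
    have "(norm (w - q - q))\<^sup>2 = (norm w)\<^sup>2 - 4 * (w \<bullet> q) + 4 * (norm q)\<^sup>2"
      by (simp add: power2_norm_eq_inner inner_diff_left inner_diff_right inner_commute)
    also have "\<dots> = 1 - 4 * (u \<bullet> q - (norm q)\<^sup>2 * norm u) / norm u"
      using \<open>u \<noteq> 0\<close> by (simp add: w_def field_simps)
    also have "\<dots> \<le> 1"
      using steep by (simp add: mult.commute)
    finally show ?thesis
      by (simp add: power_le_one_iff abs_square_le_1)
  qed
  ultimately have "(w - q) \<bullet> u \<le> icb_term u q z"
    by (rule inner_le_icb_term)
  moreover have "(w - q) \<bullet> u = norm u - u \<bullet> q"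
    using \<open>u \<noteq> 0\<close> by (simp add: w_def inner_diff_left inner_commute[of q] dot_square_norm power2_eq_square)
  ultimately show ?thesis
    by simp
qed

lemma norm_orth_part_mult_le_icb_term:
  fixes u q z :: "'a::real_inner"
  assumes "norm q \<le> 1"
  shows "norm (orth_part u q) * sqrt (1 - (norm q)\<^sup>2) \<le> icb_term u q z"
proof -
  define p where "p = orth_part u q"
  define y where "y = (sqrt (1 - (norm q)\<^sup>2) / norm p) *\<^sub>R p"
  have "(norm y)\<^sup>2 \<le> 1 - (norm q)\<^sup>2"
    using assms by (cases "p = 0") (simp_all add: y_def power_mult_distrib power_divide power_le_one)
  moreover have "y \<bullet> q = 0"
    by (simp add: y_def p_def)
  ultimately have "(norm (y + q))\<^sup>2 \<le> 1" "(norm (y - q))\<^sup>2 \<le> 1"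
    by (simp_all add: power2_norm_eq_inner inner_simps inner_commute)
  then have "y \<bullet> u \<le> icb_term u q z"
    by (intro inner_le_icb_term) (simp_all add: power_le_one_iff abs_square_le_1)
  moreover have "y \<bullet> u = norm p * sqrt (1 - (norm q)\<^sup>2)"
    by (simp add: y_def p_def inner_orth_part_self power2_eq_square)
  ultimately show ?thesis
    by (simp add: p_def)
qed

lemma icb_min_le_icb_term:
  fixes u q z :: "'a::real_inner"
  assumes "norm q \<le> 1"
  shows "icb_min u q \<le> icb_term u q z"
proof (cases "norm u * (norm q)\<^sup>2 < \<bar>u \<bullet> q\<bar>")
  case steep: True
  show ?thesis
  proof (cases "0 \<le> u \<bullet> q")
    case True
    then show ?thesis
      using steep diff_inner_le_icb_term[of u q z] by (simp add: icb_min_def)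
  next
    case False
    then have "icb_min u (- q) \<le> icb_term u (- q) (u - z)"
      using steep diff_inner_le_icb_term[of u "- q" "u - z"] by (simp add: icb_min_def)
    then show ?thesis
      by (simp add: icb_term_uminus)
  qed
next
  case False
  then show ?thesis
    using norm_orth_part_mult_le_icb_term[OF assms] by (simp add: icb_min_def)
qed

lemma icb_term_dual_split:
  fixes y q :: "'a::real_inner"
  assumes "y \<bullet> q = 0" and "(norm y)\<^sup>2 = 1 - (norm q)\<^sup>2" and "0 \<le> l1" and "0 \<le> l2"
  shows "icb_term (l1 *\<^sub>R (y + q) + l2 *\<^sub>R (y - q)) q (l2 *\<^sub>R (y - q)) = (l1 + l2) * (1 - (norm q)\<^sup>2)"
proof -
  have "(norm (y + q))\<^sup>2 = 1" "(norm (y - q))\<^sup>2 = 1"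
    using assms(1,2) by (simp_all add: power2_norm_eq_inner inner_simps inner_commute)
  then have "norm (y + q) = 1" "norm (y - q) = 1"
    using norm_ge_zero[of "y + q"] norm_ge_zero[of "y - q"] by (auto simp: power2_eq_1_iff)
  then have "norm (l1 *\<^sub>R (y + q)) = l1" "norm (l2 *\<^sub>R (y - q)) = l2"
    using assms(3,4) by simp_all
  moreover have "q \<bullet> y = 0"
    using assms(1) by (simp add: inner_commute)
  ultimately show ?thesis
    by (simp add: icb_term_def inner_add_right inner_diff_right power2_norm_eq_inner algebra_simps)
qed

lemma abs_proj_coeff_le:
  fixes u q :: "'a::real_inner"
  assumes flat: "\<bar>u \<bullet> q\<bar> \<le> norm u * (norm q)\<^sup>2" and q1: "norm q < 1"
  shows "\<bar>(u \<bullet> q) / (norm q)\<^sup>2\<bar> \<le> norm (orth_part u q) / sqrt (1 - (norm q)\<^sup>2)"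
proof (cases "q = 0")
  case False
  define r where "r = (norm q)\<^sup>2"
  define c where "c = u \<bullet> q"
  have "0 < r" and "r < 1"
    using False q1 by (simp_all add: r_def abs_square_less_1)
  have "c\<^sup>2 / r\<^sup>2 \<le> (norm u)\<^sup>2"
    using power_mono[OF flat abs_ge_zero, of 2] \<open>0 < r\<close>
    by (simp add: c_def r_def pos_divide_le_eq power_mult_distrib)
  moreover have "c\<^sup>2 / r\<^sup>2 * r = c\<^sup>2 / r"
    using \<open>0 < r\<close> by (simp add: power2_eq_square)
  ultimately have "c\<^sup>2 / r\<^sup>2 * (1 - r) \<le> (norm u)\<^sup>2 - c\<^sup>2 / r"
    by (simp add: right_diff_distrib)
  then have "(c / r)\<^sup>2 \<le> (norm (orth_part u q) / sqrt (1 - r))\<^sup>2"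
    using \<open>r < 1\<close> by (simp add: norm_orth_part_sq pos_le_divide_eq power_divide c_def r_def)
  moreover have "0 \<le> norm (orth_part u q) / sqrt (1 - r)"
    using \<open>r < 1\<close> by simp
  ultimately show ?thesis
    unfolding c_def[symmetric] r_def[symmetric] by (metis power2_abs power2_le_imp_le)
qed simp

lemma icb_term_interior_minimizer:
  fixes u q :: "'a::real_inner"
  assumes flat: "\<bar>u \<bullet> q\<bar> \<le> norm u * (norm q)\<^sup>2" and q1: "norm q < 1"
  shows "\<exists>z. icb_term u q z = norm (orth_part u q) * sqrt (1 - (norm q)\<^sup>2)"
proof -
  define p where "p = orth_part u q"
  define s where "s = sqrt (1 - (norm q)\<^sup>2)"
  define L where "L = norm p / s"
  define M where "M = (u \<bullet> q) / (norm q)\<^sup>2"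
  have "(norm q)\<^sup>2 < 1"
    using q1 by (simp add: abs_square_less_1)
  then have "0 < s" and s2: "s\<^sup>2 = 1 - (norm q)\<^sup>2"
    by (simp_all add: s_def)
  have "\<bar>M\<bar> \<le> L"
    using abs_proj_coeff_le[OF flat q1] by (simp add: M_def L_def p_def s_def)
  have u_decomp: "u = p + M *\<^sub>R q"
    by (simp add: p_def M_def orth_part_def)
  show ?thesis
  proof (cases "p = 0")
    case True
    then have "u = 0"
      using \<open>\<bar>M\<bar> \<le> L\<close> u_decomp by (simp add: L_def)
    then show ?thesis
      by (intro exI[of _ 0]) (simp add: icb_term_def orth_part_def)
  next
    case False
    text \<open>The unit vectors y + q and y - q are the optimal dual directions, and u splits
      into nonnegative multiples of them.\<close>
    define y where "y = (1 / L) *\<^sub>R p"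
    have "L *\<^sub>R y = p"
      using False \<open>0 < s\<close> by (simp add: y_def L_def)
    have half_sum: "(L + M) / 2 + (L - M) / 2 = L" and half_diff: "(L + M) / 2 - (L - M) / 2 = M"
      by (simp_all add: field_simps)
    have "((L + M) / 2) *\<^sub>R (y + q) + ((L - M) / 2) *\<^sub>R (y - q)
        = ((L + M) / 2 + (L - M) / 2) *\<^sub>R y + ((L + M) / 2 - (L - M) / 2) *\<^sub>R q"
      by (simp add: algebra_simps)
    also have "\<dots> = u"
      by (simp add: half_sum half_diff u_decomp \<open>L *\<^sub>R y = p\<close>)
    finally have "u = ((L + M) / 2) *\<^sub>R (y + q) + ((L - M) / 2) *\<^sub>R (y - q)" ..
    moreover have "y \<bullet> q = 0"
      by (simp add: y_def p_def)
    moreover have "(norm y)\<^sup>2 = 1 - (norm q)\<^sup>2"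
      using False \<open>0 < s\<close> s2 by (simp add: y_def L_def power_divide)
    ultimately have "icb_term u q (((L - M) / 2) *\<^sub>R (y - q)) = L * s\<^sup>2"
      using \<open>\<bar>M\<bar> \<le> L\<close> icb_term_dual_split[of y q "(L + M) / 2" "(L - M) / 2"]
      by (simp add: s2 half_sum)
    also have "L * s\<^sup>2 = norm p * s"
      using \<open>0 < s\<close> by (simp add: L_def power2_eq_square)
    finally show ?thesis
      by (auto simp: p_def s_def)
  qed
qed

lemma icb_term_boundary_approx:
  fixes u q :: "'a::real_inner"
  assumes q1: "norm q = 1" and e: "e > 0"
  shows "\<exists>z. icb_term u q z < e"
proof -
  define c where "c = u \<bullet> q"
  define t where "t = (norm u)\<^sup>2 / e + \<bar>c\<bar> + 1"
  have "(norm u)\<^sup>2 < 2 * t * e"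
    using e by (simp add: t_def field_simps add_pos_nonneg)
  have "0 < t"
    using e by (simp add: t_def add_nonneg_pos)
  have "q \<bullet> q = 1"
    using q1 by (simp add: dot_square_norm)
  then have "(norm (u + t *\<^sub>R q))\<^sup>2 = (norm u)\<^sup>2 + 2 * t * c + t\<^sup>2"
    by (simp add: power2_norm_eq_inner inner_add_left inner_add_right inner_commute[of q u] c_def)
       (simp add: power2_eq_square algebra_simps)
  also have "\<dots> < t\<^sup>2 + 2 * t * c + 2 * t * e + (c + e)\<^sup>2"
    using \<open>(norm u)\<^sup>2 < 2 * t * e\<close> zero_le_power2[of "c + e"] by linarith
  also have "\<dots> = (t + c + e)\<^sup>2"
    by (simp add: power2_eq_square algebra_simps)
  finally have "(norm (u + t *\<^sub>R q))\<^sup>2 < (t + c + e)\<^sup>2" .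
  moreover have "0 \<le> t + c + e"
    using e abs_ge_minus_self[of c] divide_nonneg_pos[OF zero_le_power2[of "norm u"] e]
    unfolding t_def by linarith
  ultimately have "norm (u + t *\<^sub>R q) < t + c + e"
    by (rule power2_less_imp_less)
  moreover have "icb_term u q (- (t *\<^sub>R q)) = norm (u + t *\<^sub>R q) - t - c"
    using q1 \<open>q \<bullet> q = 1\<close> \<open>0 < t\<close> by (simp add: icb_term_def c_def inner_commute)
  ultimately show ?thesis
    by (intro exI[of _ "- (t *\<^sub>R q)"]) simp
qed

lemma icb_min_approx:
  fixes u q :: "'a::real_inner"
  assumes q1: "norm q \<le> 1" and e: "0 < e"
  shows "\<exists>z. icb_term u q z < icb_min u q + e"
proof (cases "norm u * (norm q)\<^sup>2 < \<bar>u \<bullet> q\<bar>")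
  case True
  then have "icb_term u q (if 0 \<le> u \<bullet> q then 0 else u) = icb_min u q"
    by (simp add: icb_term_def icb_min_def inner_commute)
  then show ?thesis
    using e by (metis less_add_same_cancel1)
next
  case flat: False
  show ?thesis
  proof (cases "norm q = 1")
    case True
    then show ?thesis
      using flat icb_term_boundary_approx[OF True e, of u] by (simp add: icb_min_def)
  next
    case False
    then obtain z where "icb_term u q z = icb_min u q"
      using flat q1 icb_term_interior_minimizer[of u q] by (force simp: icb_min_def)
    then show ?thesis
      using e by (metis less_add_same_cancel1)
  qed
qed

lemma G_eq_icb_min: "G a b = icb_min a b"
proof (cases "a = 0 \<or> b = 0")
  case True
  then show ?thesis
    by (auto simp: G_def icb_min_def vangle_def orth_part_def)
next
  case False
  define c where "c = a \<bullet> b"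
  define x where "x = c / (norm a * norm b)"
  have "\<bar>c\<bar> \<le> norm a * norm b"
    unfolding c_def by (rule Cauchy_Schwarz_ineq2)
  then have "\<bar>x\<bar> \<le> 1"
    using False by (simp add: x_def abs_divide divide_le_eq_1)
  have "vangle a b = arccos x"
    using False by (simp add: vangle_def x_def c_def)
  then have cos: "cos (vangle a b) = x" and sin: "sin (vangle a b) = sqrt (1 - x\<^sup>2)"
    using \<open>\<bar>x\<bar> \<le> 1\<close> by (simp_all add: cos_arccos_abs sin_arccos_abs)
  have steep_iff: "norm b < \<bar>x\<bar> \<longleftrightarrow> norm a * (norm b)\<^sup>2 < \<bar>c\<bar>"
    using False by (simp add: x_def abs_divide field_simps power2_eq_square)
  show ?thesis
  proof (cases "norm a * (norm b)\<^sup>2 < \<bar>c\<bar>")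
    case True
    have "norm a * (1 - \<bar>x\<bar> * norm b) = norm a - \<bar>c\<bar>"
      using False by (simp add: x_def abs_divide field_simps)
    then show ?thesis
      using True steep_iff cos by (simp add: G_def icb_min_def c_def)
  next
    case flat: False
    have "norm (orth_part a b) = sqrt ((norm a)\<^sup>2 - c\<^sup>2 / (norm b)\<^sup>2)"
      using norm_orth_part_sq[of a b] by (simp add: c_def real_sqrt_unique)
    also have "(norm a)\<^sup>2 - c\<^sup>2 / (norm b)\<^sup>2 = (norm a)\<^sup>2 * (1 - x\<^sup>2)"
      using False by (simp add: x_def power_divide power_mult_distrib field_simps)
    also have "sqrt \<dots> = norm a * sqrt (1 - x\<^sup>2)"
      by (simp add: real_sqrt_mult)
    finally show ?thesis
      using flat steep_iff cos sin \<open>\<bar>x\<bar> \<le> 1\<close>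
      by (simp add: G_def icb_min_def c_def abs_square_le_1)
  qed
qed

lemma suminf_separable_approx:
  fixes f :: "nat \<Rightarrow> 'a \<Rightarrow> real" and P :: "(nat \<Rightarrow> 'a) \<Rightarrow> bool"
  assumes lower: "\<And>i x. g i \<le> f i x"
    and approx: "\<And>i e. 0 < e \<Longrightarrow> \<exists>x. f i x < g i + e"
    and summable: "\<And>z. P z \<Longrightarrow> summable (\<lambda>i. f i (z i))"
    and patch: "\<And>N z. P (\<lambda>i. if i < N then z i else b i)"
    and "summable g" and "0 < e"
  shows "\<exists>z. P z \<and> (\<Sum>i. f i (z i)) < (\<Sum>i. g i) + e"
proof -
  have "summable (\<lambda>i. f i (b i) - g i)"
    using summable[of b] patch[of 0] \<open>summable g\<close> by (simp add: summable_diff)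
  from suminf_exist_split[OF _ this] \<open>0 < e\<close>
  obtain N where tail: "norm (\<Sum>i. f (i + N) (b (i + N)) - g (i + N)) < e / 2"
    by (metis half_gt_zero order_refl)
  define e' where "e' = e / (2 * (real N + 1))"
  have "0 < e'"
    using \<open>0 < e\<close> by (simp add: e'_def)
  then have "\<forall>i. \<exists>x. f i x < g i + e'"
    using approx by blast
  then obtain x where x: "\<And>i. f i (x i) < g i + e'"
    by metis
  define z where "z = (\<lambda>i. if i < N then x i else b i)"
  define k where "k = (\<lambda>i. f i (z i) - g i)"
  have "P z"
    unfolding z_def by (rule patch)
  then have k_sums: "k sums ((\<Sum>i. f i (z i)) - (\<Sum>i. g i))"
    unfolding k_def using summable \<open>summable g\<close> by (intro sums_diff summable_sums)
  have "(\<Sum>i. k i) = (\<Sum>i. k (i + N)) + (\<Sum>i<N. k i)"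
    using k_sums by (intro suminf_split_initial_segment) (auto simp: sums_iff)
  moreover have "(\<Sum>i. k (i + N)) = (\<Sum>i. f (i + N) (b (i + N)) - g (i + N))"
    by (simp add: k_def z_def)
  moreover have "(\<Sum>i<N. k i) \<le> real N * e'"
  proof -
    have "k i \<le> e'" if "i < N" for i
      using that x[of i] by (simp add: k_def z_def)
    then show ?thesis
      using sum_mono[of "{..<N}" k "\<lambda>_. e'"] by simp
  qed
  moreover have "real N * e' < e / 2"
    using \<open>0 < e\<close> by (simp add: e'_def field_simps)
  ultimately have "(\<Sum>i. k i) < e"
    using tail by simp
  then show ?thesis
    using \<open>P z\<close> k_sums by (intro exI[of _ z]) (auto simp: sums_iff)
qed

lemma Inf_suminf_separable:
  fixes f :: "nat \<Rightarrow> 'a \<Rightarrow> real" and P :: "(nat \<Rightarrow> 'a) \<Rightarrow> bool"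
  assumes nonneg: "\<And>i x. 0 \<le> f i x"
    and lower: "\<And>i x. g i \<le> f i x"
    and approx: "\<And>i e. 0 < e \<Longrightarrow> \<exists>x. f i x < g i + e"
    and summable: "\<And>z. P z \<Longrightarrow> summable (\<lambda>i. f i (z i))"
    and patch: "\<And>N z. P (\<lambda>i. if i < N then z i else b i)"
  shows "Inf {\<Sum>i. f i (z i) | z. P z} = (\<Sum>i. g i)"
proof -
  have "P b"
    using patch[of 0] by simp
  have "0 \<le> g i" for i
  proof (rule field_le_epsilon)
    fix e :: real
    assume "0 < e"
    then obtain x where "f i x < g i + e"
      using approx by blast
    then show "0 \<le> g i + e"
      using nonneg[of i x] by simp
  qed
  then have "summable g"
    using lower by (intro summable_comparison_test'[OF summable[OF \<open>P b\<close>], of 0]) simp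
  show ?thesis
  proof (rule cInf_eq_non_empty)
    show "{\<Sum>i. f i (z i) | z. P z} \<noteq> {}"
      using \<open>P b\<close> by blast
    show "(\<Sum>i. g i) \<le> s" if "s \<in> {\<Sum>i. f i (z i) | z. P z}" for s
      using that lower \<open>summable g\<close> summable by (blast intro: suminf_le)
    show "y \<le> (\<Sum>i. g i)" if "\<And>s. s \<in> {\<Sum>i. f i (z i) | z. P z} \<Longrightarrow> y \<le> s" for y
    proof (rule field_le_epsilon)
      fix e :: real
      assume "0 < e"
      then obtain z where "P z" "(\<Sum>i. f i (z i)) < (\<Sum>i. g i) + e"
        using suminf_separable_approx[where f = f and g = g and P = P and b = b,
            OF lower approx summable patch \<open>summable g\<close>]
        by blast
      then show "y \<le> (\<Sum>i. g i) + e"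
        using that[of "\<Sum>i. f i (z i)"] by force
    qed
  qed
qed

lemma in_l1_add: "in_l1 x \<Longrightarrow> in_l1 y \<Longrightarrow> in_l1 (\<lambda>i. x i + y i)"
  unfolding in_l1_def
  by (rule summable_comparison_test'[where g = "\<lambda>i. norm (x i) + norm (y i)"])
     (auto intro: summable_add norm_triangle_ineq)

lemma in_l1_uminus: "in_l1 x \<Longrightarrow> in_l1 (\<lambda>i. - x i)"
  by (simp add: in_l1_def)

lemma in_l1_diff: "in_l1 x \<Longrightarrow> in_l1 y \<Longrightarrow> in_l1 (\<lambda>i. x i - y i)"
  using in_l1_add[of x "\<lambda>i. - y i"] in_l1_uminus[of y] by simp

lemma summable_inner_in_l1:
  assumes "in_linf q" and "in_l1 x"
  shows "summable (\<lambda>i. q i \<bullet> x i)"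
proof -
  obtain B where B: "\<And>i. norm (q i) \<le> B"
    using assms(1) unfolding in_linf_def bounded_iff by blast
  have bound: "norm (q i \<bullet> x i) \<le> B * norm (x i)" for i
  proof -
    have "\<bar>q i \<bullet> x i\<bar> \<le> norm (q i) * norm (x i)"
      by (rule Cauchy_Schwarz_ineq2)
    also have "\<dots> \<le> B * norm (x i)"
      using B by (rule mult_right_mono) simp
    finally show ?thesis
      by simp
  qed
  show ?thesis
  proof (rule summable_comparison_test')
    show "summable (\<lambda>i. B * norm (x i))"
      using assms(2) by (simp add: in_l1_def summable_mult)
    show "norm (q i \<bullet> x i) \<le> B * norm (x i)" for i
      by (rule bound)
  qed
qed

lemma bregman_l1_sums:
  assumes "in_linf q" and "in_l1 u" and "in_l1 v"
  shows "(\<lambda>i. norm (u i) - norm (v i) - q i \<bullet> (u i - v i)) sums bregman_l1 q u v"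
  using assms summable_inner_in_l1[OF assms(1) in_l1_diff[OF assms(2,3)]]
  unfolding bregman_l1_def l1norm_def pairing_def in_l1_def
  by (intro sums_diff summable_sums)

text \<open>Testing the subgradient inequality with v + q_i e_i yields norm (q i) ^ 2 \<le> norm (q i).\<close>
lemma subdiff_l1_norm_le_1:
  fixes q v :: "nat \<Rightarrow> real^'m"
  assumes v: "in_l1 v" and q: "q \<in> subdiff_l1 v"
  shows "norm (q i) \<le> 1"
proof -
  define K where "K = norm (v i + q i) - norm (v i)"
  define w where "w = (\<lambda>j. v j + (if j = i then q i else 0))"
  have "(\<lambda>j. norm (w j)) = (\<lambda>j. norm (v j) + (if j = i then K else 0))"
    by (auto simp: w_def K_def)
  then have "(\<lambda>j. norm (w j)) sums (l1norm v + K)"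
    using sums_add[OF summable_sums sums_single[of i "\<lambda>_. K"]] v by (simp add: in_l1_def l1norm_def)
  then have "in_l1 w" and "l1norm w = l1norm v + K"
    by (auto simp: in_l1_def l1norm_def sums_iff)
  moreover have "pairing q (\<lambda>j. w j - v j) = (norm (q i))\<^sup>2"
  proof -
    have "(\<lambda>j. q j \<bullet> (w j - v j)) = (\<lambda>j. if j = i then q i \<bullet> q i else 0)"
      by (auto simp: w_def)
    then show ?thesis
      using sums_single[of i "\<lambda>_. q i \<bullet> q i"] by (simp add: pairing_def sums_iff power2_norm_eq_inner)
  qed
  ultimately have "(norm (q i))\<^sup>2 \<le> K"
    using q by (fastforce simp: subdiff_l1_def)
  also have "K \<le> norm (q i)"
    using norm_triangle_ineq[of "v i" "q i"] by (simp add: K_def)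
  finally show ?thesis
    using mult_le_cancel_left1[of "norm (q i)" "norm (q i)"] by (auto simp: power2_eq_square)
qed

text \<open>Testing the subgradient inequality with 0 and 2 v.\<close>
lemma subdiff_l1_pairing_self:
  fixes q v :: "nat \<Rightarrow> real^'m"
  assumes v: "in_l1 v" and q: "q \<in> subdiff_l1 v"
  shows "pairing q v = l1norm v"
proof -
  have "in_linf q" and subgrad: "\<And>w. in_l1 w \<Longrightarrow> l1norm v + pairing q (\<lambda>i. w i - v i) \<le> l1norm w"
    using q by (auto simp: subdiff_l1_def)
  have "summable (\<lambda>i. q i \<bullet> v i)"
    using summable_inner_in_l1[OF \<open>in_linf q\<close> v] .
  have "l1norm v + pairing q (\<lambda>i. 0 - v i) \<le> l1norm (\<lambda>i. 0 :: real^'m)"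
    using subgrad[of "\<lambda>i. 0"] by (simp add: in_l1_def)
  moreover have "l1norm v + pairing q (\<lambda>i. 2 *\<^sub>R v i - v i) \<le> l1norm (\<lambda>i. 2 *\<^sub>R v i)"
    using subgrad[of "\<lambda>i. 2 *\<^sub>R v i"] v by (simp add: in_l1_def summable_mult)
  moreover have "l1norm (\<lambda>i. 2 *\<^sub>R v i) = 2 * l1norm v"
    using v by (simp add: l1norm_def in_l1_def suminf_mult)
  moreover have "pairing q (\<lambda>i. 0 - v i) = - pairing q v"
    using suminf_minus[OF \<open>summable (\<lambda>i. q i \<bullet> v i)\<close>] by (simp add: pairing_def)
  ultimately show ?thesis
    by (simp add: pairing_def l1norm_def algebra_simps)
qed

lemma icb_objective_sums:
  assumes u: "in_l1 u" and v: "in_l1 v" and z: "in_l1 z" and q: "q \<in> subdiff_l1 v"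
  shows "(\<lambda>i. icb_term (u i) (q i) (z i)) sums
    (bregman_l1 q (\<lambda>i. u i - z i) v + bregman_l1 (\<lambda>i. - q i) z (\<lambda>i. - v i))"
proof -
  have "in_linf q" and "in_linf (\<lambda>i. - q i)"
    using q by (auto simp: subdiff_l1_def in_linf_def)
  have "(\<lambda>i. q i \<bullet> v i - norm (v i)) sums (pairing q v - l1norm v)"
    using summable_inner_in_l1[OF \<open>in_linf q\<close> v] v
    unfolding pairing_def l1norm_def in_l1_def by (intro sums_diff summable_sums)
  then have "(\<lambda>i. q i \<bullet> v i - norm (v i)) sums 0"
    by (simp add: subdiff_l1_pairing_self[OF v q])
  then have "(\<lambda>i. (norm (u i - z i) - norm (v i) - q i \<bullet> (u i - z i - v i))
      + (norm (z i) - norm (- v i) - - q i \<bullet> (z i - - v i)) - 2 * (q i \<bullet> v i - norm (v i)))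
    sums (bregman_l1 q (\<lambda>i. u i - z i) v + bregman_l1 (\<lambda>i. - q i) z (\<lambda>i. - v i) - 2 * 0)"
    using u v z \<open>in_linf q\<close> \<open>in_linf (\<lambda>i. - q i)\<close>
    by (intro sums_diff sums_add sums_mult bregman_l1_sums in_l1_diff in_l1_uminus)
  then show ?thesis
    by (simp add: icb_term_def inner_simps algebra_simps)
qed

lemma ICB_l1_eq_Inf_icb_term:
  assumes "in_l1 u" and "in_l1 v" and "q \<in> subdiff_l1 v"
  shows "ICB_l1 q u v = Inf {\<Sum>i. icb_term (u i) (q i) (z i) | z. in_l1 z}"
proof -
  have "bregman_l1 q (\<lambda>i. u i - z i) v + bregman_l1 (\<lambda>i. - q i) z (\<lambda>i. - v i)
      = (\<Sum>i. icb_term (u i) (q i) (z i))" if "in_l1 z" for z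
    using icb_objective_sums[OF assms(1,2) that assms(3)] by (simp add: sums_iff)
  then show ?thesis
    unfolding ICB_l1_def by (intro arg_cong[where f = Inf] Collect_cong) metis
qed

lemma in_l1_truncate: "in_l1 (\<lambda>i. if i < N then z i else 0)"
  unfolding in_l1_def by (rule summable_finite[of "{..<N}"]) auto

theorem theorem6:
  fixes u v q :: "nat \<Rightarrow> real^'m"
  assumes "in_l1 u" and "in_l1 v" and "q \<in> subdiff_l1 v"
  shows "ICB_l1 q u v = (\<Sum>i. G (u i) (q i))"
proof -
  have q1: "norm (q i) \<le> 1" for i
    using subdiff_l1_norm_le_1[OF assms(2,3)] .
  have "ICB_l1 q u v = Inf {\<Sum>i. icb_term (u i) (q i) (z i) | z. in_l1 z}"
    using assms by (rule ICB_l1_eq_Inf_icb_term)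
  also have "\<dots> = (\<Sum>i. icb_min (u i) (q i))"
  proof (rule Inf_suminf_separable[where f = "\<lambda>i. icb_term (u i) (q i)" and P = in_l1 and b = "\<lambda>_. 0"])
    show "0 \<le> icb_term (u i) (q i) x" for i x
      using q1 by (rule icb_term_nonneg)
    show "icb_min (u i) (q i) \<le> icb_term (u i) (q i) x" for i x
      using q1 by (rule icb_min_le_icb_term)
    show "\<exists>x. icb_term (u i) (q i) x < icb_min (u i) (q i) + e" if "0 < e" for i e
      using q1 that by (rule icb_min_approx)
    show "summable (\<lambda>i. icb_term (u i) (q i) (z i))" if "in_l1 z" for z
      using icb_objective_sums[OF assms(1,2) that assms(3)] by (rule sums_summable)
  qed (rule in_l1_truncate)
  finally show ?thesis
    by (simp add: G_eq_icb_min)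
qed

end
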